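(* Let $L = L_p + \varepsilon L_d \in \mathbb{DH}[t]$ be a line polynomial, let $h, \ell \in \mathbb{R}[t]$ be nonzero, and let $Q = q_0 + q_1\mathbf{i} + q_2\mathbf{j} + q_3\mathbf{k} \in \mathbb{H}[t]$ be such that $P = Qh\ell$ satisfies $P\mathbf{k}\overline{P} = hL_p$. Write $M = m_1\mathbf{i} + m_2\mathbf{j} + m_3\mathbf{k} = Q\mathbf{k}\overline{Q}$ and $k_5\mathbf{i} + k_6\mathbf{j} + k_7\mathbf{k} = K_d := L_d/\ell$, and assume $m_3 \neq 0$ and $q_3 \neq 0$. Then all solutions $D = d_0 + d_1\mathbf{i} + d_2\mathbf{j} + d_3\mathbf{k}$, with $d_0,\dots,d_3$ in the field of real rational functions $\mathbb{R}(t)$, of the equation $$-P\mathbf{k}\overline{D} - D\mathbf{k}\overline{P} = hL_d$$ are given by $$d_1 = -\frac{2d_0q_2}{2q_3} + \frac{k_5(q_2^2-q_3^2)+k_6(q_0q_3-q_1q_2)}{2q_3m_3},$$ $$d_2 = \frac{2d_0q_1}{2q_3} + \frac{k_5(-q_0q_3-q_1q_2)+k_6(q_1^2-q_3^2)}{2q_3m_3},$$ $$d_3 = -\frac{2d_0q_0}{2q_3} + \frac{k_5(q_1q_3+q_0q_2)+k_6(q_2q_3-q_0q_1)}{2q_3m_3},$$ where $d_0 \in \mathbb{R}(t)$ is arbitrary.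
   Context: $\mathbb{H}$ denotes the real quaternions with units $\mathbf{i},\mathbf{j},\mathbf{k}$ and conjugation $\overline{p_0 + p_1\mathbf{i} + p_2\mathbf{j} + p_3\mathbf{k}} = p_0 - p_1\mathbf{i} - p_2\mathbf{j} - p_3\mathbf{k}$; $\mathbb{DH} = \mathbb{H} + \varepsilon\mathbb{H}$ with $\varepsilon^2=0$, $\varepsilon$ central. $\mathbb{H}[t]$, $\mathbb{DH}[t]$ are polynomial rings in a real indeterminate $t$ commuting with the coefficients; conjugation acts coefficientwise. A line polynomial is $L = L_p + \varepsilon L_d \in \mathbb{DH}[t]$ with $L_p, L_d \in \mathbb{H}[t]$ vectorial (zero scalar part), $L_p\overline{L_d} + L_d\overline{L_p} = 0$, and $L_p \neq 0$. (In the paper, $\ell$ is the minimal saturating factor of $L_p$: the monic real polynomial of minimal degree with $L_p\ell = P'\mathbf{k}\overline{P'}$ for some $P' \in \mathbb{H}[t]$.) *)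

theory Defs
  imports "HOL-Computational_Algebra.Polynomial" "HOL-Computational_Algebra.Fraction_Field"
begin

text \<open>Quaternions with coefficients in a commutative ring 'a:
  Quat p0 p1 p2 p3 stands for p0 + p1 i + p2 j + p3 k.
  H[t] is rendered as real poly quat, and quaternions over R(t) as real poly fract quat.\<close>

datatype 'a quat = Quat (qre: 'a) (qi: 'a) (qj: 'a) (qk: 'a)

definition qmul :: "'a::comm_ring quat \<Rightarrow> 'a quat \<Rightarrow> 'a quat" where
  "qmul a b = Quat
     (qre a * qre b - qi a * qi b - qj a * qj b - qk a * qk b)
     (qre a * qi b + qi a * qre b + qj a * qk b - qk a * qj b)
     (qre a * qj b - qi a * qk b + qj a * qre b + qk a * qi b)
     (qre a * qk b + qi a * qj b - qj a * qi b + qk a * qre b)"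

definition qadd :: "'a::comm_ring quat \<Rightarrow> 'a quat \<Rightarrow> 'a quat" where
  "qadd a b = Quat (qre a + qre b) (qi a + qi b) (qj a + qj b) (qk a + qk b)"

definition qneg :: "'a::comm_ring quat \<Rightarrow> 'a quat" where
  "qneg a = Quat (- qre a) (- qi a) (- qj a) (- qk a)"

definition qcnj :: "'a::comm_ring quat \<Rightarrow> 'a quat" where
  "qcnj a = Quat (qre a) (- qi a) (- qj a) (- qk a)"

definition qscale :: "'a::comm_ring \<Rightarrow> 'a quat \<Rightarrow> 'a quat" where
  "qscale c a = Quat (c * qre a) (c * qi a) (c * qj a) (c * qk a)"

definition qzero :: "'a::comm_ring quat" where
  "qzero = Quat 0 0 0 0"

definition qunit_k :: "'a::comm_ring_1 quat" where
  "qunit_k = Quat 0 0 0 1"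

definition vectorial :: "'a::comm_ring quat \<Rightarrow> bool" where
  "vectorial a \<longleftrightarrow> qre a = 0"

definition to_fract :: "real poly \<Rightarrow> real poly fract" where
  "to_fract a = Fract a 1"

definition qfr :: "real poly quat \<Rightarrow> real poly fract quat" where
  "qfr a = Quat (to_fract (qre a)) (to_fract (qi a)) (to_fract (qj a)) (to_fract (qk a))"

text \<open>Line polynomial L = Lp + eps Ld.\<close>
definition line_poly :: "real poly quat \<Rightarrow> real poly quat \<Rightarrow> bool" where
  "line_poly Lp Ld \<longleftrightarrow> vectorial Lp \<and> vectorial Ld \<and>
     qadd (qmul Lp (qcnj Ld)) (qmul Ld (qcnj Lp)) = qzero \<and> Lp \<noteq> qzero"

end

theory Submission
  imports Defs
begin

text \<open>Since \<open>P = h\<ell>Q\<close>, the equation is \<open>h\<ell>\<close> times the linear equation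
  \<open>QkD\<^sup>* + DkQ\<^sup>* = -K\<^sub>d\<close> in \<open>D\<close> (writing \<open>X\<^sup>*\<close> for the conjugate). The map \<open>D \<mapsto> QkD\<^sup>* + DkQ\<^sup>*\<close> annihilates \<open>Qk\<close>, whose
  real part is \<open>-q\<^sub>3 \<noteq> 0\<close>, and is injective on vectorial quaternions (the \<open>3\<times>3\<close> system
  has determinant \<open>8 q\<^sub>3 |Q|\<^sup>2\<close>). So the solutions form a line \<open>D\<^sub>0 - (d\<^sub>0/q\<^sub>3) Qk\<close> through
  a particular vectorial solution \<open>D\<^sub>0\<close>, which is written down explicitly. Checking \<open>D\<^sub>0\<close>
  needs \<open>K\<^sub>d \<bottom> M\<close> to eliminate \<open>k\<^sub>7\<close>; this is inherited from \<open>L\<^sub>p \<bottom> L\<^sub>d\<close>, as \<open>M\<close> is a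
  scalar multiple of \<open>L\<^sub>p\<close>.\<close>

lemma to_fract_0 [simp]: "to_fract 0 = 0"
  by (simp add: to_fract_def Zero_fract_def)

lemma to_fract_add [simp]: "to_fract (a + b) = to_fract a + to_fract b"
  by (simp add: to_fract_def)

lemma to_fract_mult [simp]: "to_fract (a * b) = to_fract a * to_fract b"
  by (simp add: to_fract_def)

lemma to_fract_eq_0_iff [simp]: "to_fract a = 0 \<longleftrightarrow> a = 0"
  by (simp add: to_fract_def Zero_fract_def eq_fract)

definition qdot :: "'a::comm_ring quat \<Rightarrow> 'a quat \<Rightarrow> 'a" where
  "qdot a b = qre a * qre b + qi a * qi b + qj a * qj b + qk a * qk b"

definition k_sandwich :: "'a::comm_ring_1 quat \<Rightarrow> 'a quat" where
  "k_sandwich a = qmul a (qmul qunit_k (qcnj a))"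

definition k_polar :: "'a::comm_ring_1 quat \<Rightarrow> 'a quat \<Rightarrow> 'a quat" where
  "k_polar a b = qadd (qmul a (qmul qunit_k (qcnj b))) (qmul b (qmul qunit_k (qcnj a)))"

lemma k_sandwich_Quat:
  "k_sandwich (Quat a0 a1 a2 a3) =
     Quat 0 (2 * (a0 * a2 + a1 * a3)) (2 * (a2 * a3 - a0 * a1)) (a0\<^sup>2 - a1\<^sup>2 - a2\<^sup>2 + a3\<^sup>2)"
  by (simp add: k_sandwich_def qmul_def qcnj_def qunit_k_def algebra_simps power2_eq_square)

lemma k_polar_Quat:
  "k_polar (Quat a0 a1 a2 a3) (Quat b0 b1 b2 b3) =
     Quat 0 (2 * (a2 * b0 + a3 * b1 + a0 * b2 + a1 * b3))
            (2 * (- a1 * b0 - a0 * b1 + a3 * b2 + a2 * b3))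
            (2 * (a0 * b0 - a1 * b1 - a2 * b2 + a3 * b3))"
  by (simp add: k_polar_def qmul_def qadd_def qcnj_def qunit_k_def algebra_simps)

lemma qre_qmul_qcnj_sym:
  fixes a b :: "'a::comm_ring_1 quat"
  shows "qre (qadd (qmul a (qcnj b)) (qmul b (qcnj a))) = 2 * qdot a b"
  by (simp add: qadd_def qmul_def qcnj_def qdot_def algebra_simps)

lemma qdot_qscale_left: "qdot (qscale c a) b = c * qdot a b"
  by (simp add: qdot_def qscale_def algebra_simps)

lemma qdot_qscale_right: "qdot a (qscale c b) = c * qdot a b"
  by (simp add: qdot_def qscale_def algebra_simps)

lemma qdot_self_pos:
  fixes a :: "'a::linordered_idom quat"
  assumes "qk a \<noteq> 0"
  shows "0 < qdot a a"
  using assms by (simp add: qdot_def add_nonneg_pos flip: power2_eq_square)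

lemma k_sandwich_qscale: "k_sandwich (qscale c a) = qscale (c * c) (k_sandwich a)"
  by (simp add: k_sandwich_def qmul_def qscale_def qcnj_def qunit_k_def algebra_simps)

lemma k_polar_qadd_right: "k_polar a (qadd b c) = qadd (k_polar a b) (k_polar a c)"
  by (simp add: k_polar_def qmul_def qadd_def qcnj_def qunit_k_def algebra_simps)

lemma k_polar_qscale_right: "k_polar a (qscale c b) = qscale c (k_polar a b)"
  by (simp add: k_polar_def qmul_def qadd_def qscale_def qcnj_def qunit_k_def algebra_simps)

lemma k_polar_diff_right: "k_polar a (qadd b (qneg c)) = qadd (k_polar a b) (qneg (k_polar a c))"
  by (simp add: k_polar_def qmul_def qadd_def qneg_def qcnj_def qunit_k_def algebra_simps)

lemma k_polar_mult_k_right: "k_polar a (qmul a qunit_k) = qzero"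
  by (simp add: k_polar_def qmul_def qadd_def qcnj_def qunit_k_def qzero_def algebra_simps)

lemma qfr_k_sandwich: "qfr (k_sandwich a) = k_sandwich (qfr a)"
  by (simp add: qfr_def k_sandwich_def qmul_def qcnj_def qunit_k_def to_fract_def)

lemma qfr_qscale: "qfr (qscale c a) = qscale (to_fract c) (qfr a)"
  by (simp add: qfr_def qscale_def)

lemma qdot_qfr: "qdot (qfr a) (qfr b) = to_fract (qdot a b)"
  by (simp add: qfr_def qdot_def)

lemma line_poly_qdot_eq_0: "line_poly Lp Ld \<Longrightarrow> qdot Lp Ld = 0"
  using qre_qmul_qcnj_sym[of Lp Ld] by (simp add: line_poly_def qzero_def)

lemma line_poly_k_sandwich_orth:
  assumes "line_poly Lp Ld" and "k_sandwich (qscale s Q) = qscale h Lp"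
    and "h \<noteq> 0" and "s \<noteq> 0"
  shows "qdot (k_sandwich Q) Ld = 0"
proof -
  have "s * s * qdot (k_sandwich Q) Ld = h * qdot Lp Ld"
    using assms(2) by (metis k_sandwich_qscale qdot_qscale_left)
  then show ?thesis
    using line_poly_qdot_eq_0[OF assms(1)] assms(3,4) by simp
qed

lemma k_polar_vectorial_kernel:
  fixes Q E :: "'a::{idom, ring_char_0} quat"
  assumes "k_polar Q E = qzero" and "qre E = 0" and "qk Q \<noteq> 0" and "qdot Q Q \<noteq> 0"
  shows "E = qzero"
proof -
  obtain q0 q1 q2 q3 where Q: "Q = Quat q0 q1 q2 q3" by (cases Q)
  obtain e1 e2 e3 where E: "E = Quat 0 e1 e2 e3" using assms(2) by (cases E) simp
  have sys: "q3 * e1 + q0 * e2 + q1 * e3 = 0" "- q0 * e1 + q3 * e2 + q2 * e3 = 0"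
    "- q1 * e1 - q2 * e2 + q3 * e3 = 0"
    using assms(1) unfolding Q E k_polar_Quat qzero_def quat.inject mult_eq_0_iff by simp_all
  \<comment> \<open>multiply the system by the adjugate of its coefficient matrix\<close>
  have "q3 * (q0\<^sup>2 + q1\<^sup>2 + q2\<^sup>2 + q3\<^sup>2) * e1 =
      (q3\<^sup>2 + q2\<^sup>2) * (q3 * e1 + q0 * e2 + q1 * e3) - (q0 * q3 + q1 * q2) * (- q0 * e1 + q3 * e2 + q2 * e3)
      + (q0 * q2 - q1 * q3) * (- q1 * e1 - q2 * e2 + q3 * e3)"
   "q3 * (q0\<^sup>2 + q1\<^sup>2 + q2\<^sup>2 + q3\<^sup>2) * e2 =
      (q0 * q3 - q1 * q2) * (q3 * e1 + q0 * e2 + q1 * e3) + (q3\<^sup>2 + q1\<^sup>2) * (- q0 * e1 + q3 * e2 + q2 * e3)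
      - (q2 * q3 + q0 * q1) * (- q1 * e1 - q2 * e2 + q3 * e3)"
   "q3 * (q0\<^sup>2 + q1\<^sup>2 + q2\<^sup>2 + q3\<^sup>2) * e3 =
      (q0 * q2 + q1 * q3) * (q3 * e1 + q0 * e2 + q1 * e3) + (q2 * q3 - q0 * q1) * (- q0 * e1 + q3 * e2 + q2 * e3)
      + (q3\<^sup>2 + q0\<^sup>2) * (- q1 * e1 - q2 * e2 + q3 * e3)"
    by (simp_all add: algebra_simps power2_eq_square)
  moreover have "q3 * (q0\<^sup>2 + q1\<^sup>2 + q2\<^sup>2 + q3\<^sup>2) \<noteq> 0"
    using assms(3,4) by (simp add: Q qdot_def power2_eq_square)
  ultimately show ?thesis
    using sys by (simp add: E qzero_def)
qed

fun k_polar_particular :: "'a::comm_ring_1 quat \<Rightarrow> 'a quat \<Rightarrow> 'a quat" where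
  "k_polar_particular (Quat q0 q1 q2 q3) (Quat k0 k1 k2 k3) =
     Quat 0 (k1 * (q2\<^sup>2 - q3\<^sup>2) + k2 * (q0 * q3 - q1 * q2))
            (k1 * (- q0 * q3 - q1 * q2) + k2 * (q1\<^sup>2 - q3\<^sup>2))
            (k1 * (q1 * q3 + q0 * q2) + k2 * (q2 * q3 - q0 * q1))"

lemma k_polar_of_particular:
  fixes Q K :: "'a::comm_ring_1 quat"
  assumes "qre K = 0" and "qdot (k_sandwich Q) K = 0"
  shows "k_polar Q (k_polar_particular Q K) = qscale (- 2 * qk Q * qk (k_sandwich Q)) K"
proof -
  obtain q0 q1 q2 q3 where Q: "Q = Quat q0 q1 q2 q3" by (cases Q)
  obtain k1 k2 k3 where K: "K = Quat 0 k1 k2 k3" using assms(1) by (cases K) simp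
  define m1 m2 m3 where "m1 = 2 * (q0 * q2 + q1 * q3)" and "m2 = 2 * (q2 * q3 - q0 * q1)"
    and "m3 = q0\<^sup>2 - q1\<^sup>2 - q2\<^sup>2 + q3\<^sup>2"
  have orth: "m1 * k1 + m2 * k2 + m3 * k3 = 0"
    using assms(2) by (simp add: Q K m1_def m2_def m3_def k_sandwich_Quat qdot_def)
  \<comment> \<open>the third component is where the orthogonality eliminates \<open>k3\<close>\<close>
  have "2 * (- q1 * (k1 * (q2\<^sup>2 - q3\<^sup>2) + k2 * (q0 * q3 - q1 * q2))
      - q2 * (k1 * (- q0 * q3 - q1 * q2) + k2 * (q1\<^sup>2 - q3\<^sup>2))
      + q3 * (k1 * (q1 * q3 + q0 * q2) + k2 * (q2 * q3 - q0 * q1)))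
    = 2 * q3 * (m1 * k1 + m2 * k2 + m3 * k3) - 2 * q3 * m3 * k3"
    by (simp add: m1_def m2_def m3_def algebra_simps power2_eq_square)
  then show ?thesis
    by (simp add: Q K orth k_polar_Quat k_sandwich_Quat qscale_def flip: m3_def)
      (simp add: m3_def algebra_simps power2_eq_square)
qed

definition k_polar_solution :: "'a::field quat \<Rightarrow> 'a quat \<Rightarrow> 'a \<Rightarrow> 'a quat" where
  "k_polar_solution Q K d0 = qadd (qscale (- d0 / qk Q) (qmul Q qunit_k))
     (qscale (inverse (2 * qk Q * qk (k_sandwich Q))) (k_polar_particular Q K))"

lemma qre_k_polar_solution:
  fixes Q K :: "'a::field quat"
  assumes "qk Q \<noteq> 0"
  shows "qre (k_polar_solution Q K d0) = d0"
  using assms by (cases Q; cases K) (simp add: k_polar_solution_def qadd_def qscale_def qmul_def qunit_k_def)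

lemma k_polar_solution_Quat:
  fixes q0 q1 q2 q3 :: "'a::field_char_0"
  assumes "m3 = qk (k_sandwich (Quat q0 q1 q2 q3))" and "q3 \<noteq> 0" and "m3 \<noteq> 0"
  shows "k_polar_solution (Quat q0 q1 q2 q3) (Quat k0 k1 k2 k3) d0 = Quat d0
      (- (2 * d0 * q2) / (2 * q3) + (k1 * (q2\<^sup>2 - q3\<^sup>2) + k2 * (q0 * q3 - q1 * q2)) / (2 * q3 * m3))
      ((2 * d0 * q1) / (2 * q3) + (k1 * (- q0 * q3 - q1 * q2) + k2 * (q1\<^sup>2 - q3\<^sup>2)) / (2 * q3 * m3))
      (- (2 * d0 * q0) / (2 * q3) + (k1 * (q1 * q3 + q0 * q2) + k2 * (q2 * q3 - q0 * q1)) / (2 * q3 * m3))"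
  using assms by (simp add: k_polar_solution_def qadd_def qscale_def qmul_def qunit_k_def field_simps)

lemma k_polar_solution_solves:
  fixes Q K :: "'a::field_char_0 quat"
  assumes "qk Q \<noteq> 0" and "qk (k_sandwich Q) \<noteq> 0" and "qre K = 0"
    and "qdot (k_sandwich Q) K = 0"
  shows "k_polar Q (k_polar_solution Q K d0) = qneg K"
  unfolding k_polar_solution_def k_polar_qadd_right k_polar_qscale_right k_polar_mult_k_right
    k_polar_of_particular[OF assms(3,4)]
  using assms(1,2) by (simp add: qadd_def qscale_def qneg_def qzero_def field_simps)

lemma k_polar_eq_neg_iff:
  fixes Q K D :: "'a::field_char_0 quat"
  assumes "qk Q \<noteq> 0" and "qk (k_sandwich Q) \<noteq> 0" and "qdot Q Q \<noteq> 0"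
    and "qre K = 0" and "qdot (k_sandwich Q) K = 0"
  shows "k_polar Q D = qneg K \<longleftrightarrow> D = k_polar_solution Q K (qre D)"
proof
  assume "D = k_polar_solution Q K (qre D)"
  then show "k_polar Q D = qneg K"
    using k_polar_solution_solves[OF assms(1,2,4,5)] by metis
next
  assume eq: "k_polar Q D = qneg K"
  define S where "S = k_polar_solution Q K (qre D)"
  have "k_polar Q (qadd D (qneg S)) = qadd (qneg K) (qneg (qneg K))"
    unfolding k_polar_diff_right eq S_def k_polar_solution_solves[OF assms(1,2,4,5)] ..
  also have "\<dots> = qzero"
    by (simp add: qadd_def qneg_def qzero_def)
  finally have "k_polar Q (qadd D (qneg S)) = qzero" .
  moreover have "qre (qadd D (qneg S)) = 0"
    using assms(1) by (simp add: S_def qre_k_polar_solution qadd_def qneg_def)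
  ultimately have "qadd D (qneg S) = qzero"
    by (rule k_polar_vectorial_kernel) (use assms(1,3) in simp_all)
  then show "D = S"
    by (cases D; cases S) (simp add: qadd_def qneg_def qzero_def)
qed

lemma scaled_k_polar_eq_iff:
  fixes A D K :: "'a::idom quat"
  assumes "c \<noteq> 0"
  shows "qadd (qneg (qmul (qscale c A) (qmul qunit_k (qcnj D))))
           (qneg (qmul D (qmul qunit_k (qcnj (qscale c A))))) = qscale c K
         \<longleftrightarrow> k_polar A D = qneg K"
proof -
  have expand: "qadd (qneg (qmul (qscale c A) (qmul qunit_k (qcnj D))))
      (qneg (qmul D (qmul qunit_k (qcnj (qscale c A))))) = qscale c (qneg (k_polar A D))"
    by (simp add: k_polar_def qadd_def qneg_def qscale_def qmul_def qcnj_def qunit_k_def algebra_simps)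
  show ?thesis
    unfolding expand using assms
    by (cases "k_polar A D"; cases K) (auto simp: qneg_def qscale_def minus_equation_iff simp flip: mult_minus_right)
qed

theorem lemma3:
  fixes Lp Ld Q P M :: "real poly quat" and h l :: "real poly"
    and q0 q1 q2 q3 m3 k5 k6 :: "real poly fract"
    and D :: "real poly fract quat" and d0 d1 d2 d3 :: "real poly fract"
  assumes line: "line_poly Lp Ld"
    and h: "h \<noteq> 0" and l: "l \<noteq> 0"
    and P: "P = qscale (h * l) Q"
    and PkP: "qmul P (qmul qunit_k (qcnj P)) = qscale h Lp"
    and M: "M = qmul Q (qmul qunit_k (qcnj Q))"
    and q: "q0 = to_fract (qre Q)" "q1 = to_fract (qi Q)" "q2 = to_fract (qj Q)" "q3 = to_fract (qk Q)"
    and m3: "m3 = to_fract (qk M)"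
    and k5: "k5 = to_fract (qi Ld) / to_fract l"
    and k6: "k6 = to_fract (qj Ld) / to_fract l"
    and m3nz: "m3 \<noteq> 0" and q3nz: "q3 \<noteq> 0"
    and D: "D = Quat d0 d1 d2 d3"
  shows "qadd (qneg (qmul (qfr P) (qmul qunit_k (qcnj D))))
              (qneg (qmul D (qmul qunit_k (qcnj (qfr P)))))
           = qscale (to_fract h) (qfr Ld)
    \<longleftrightarrow>
    (d1 = - (2 * d0 * q2) / (2 * q3)
          + (k5 * (q2^2 - q3^2) + k6 * (q0 * q3 - q1 * q2)) / (2 * q3 * m3) \<and>
     d2 = (2 * d0 * q1) / (2 * q3)
          + (k5 * (- q0 * q3 - q1 * q2) + k6 * (q1^2 - q3^2)) / (2 * q3 * m3) \<and>
     d3 = - (2 * d0 * q0) / (2 * q3)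
          + (k5 * (q1 * q3 + q0 * q2) + k6 * (q2 * q3 - q0 * q1)) / (2 * q3 * m3))"
proof -
  define Qf where "Qf = qfr Q"
  define K where "K = qscale (inverse (to_fract l)) (qfr Ld)"
  have Qf: "Qf = Quat q0 q1 q2 q3"
    by (simp add: Qf_def qfr_def q)
  have M_Q: "M = k_sandwich Q"
    by (simp add: M k_sandwich_def)
  have M_Qf: "qfr M = k_sandwich Qf"
    by (simp add: M_Q Qf_def qfr_k_sandwich)
  have m3_Qf: "m3 = qk (k_sandwich Qf)"
    by (simp add: m3 qfr_def flip: M_Qf)
  have K_Quat: "K = Quat 0 k5 k6 (to_fract (qk Ld) / to_fract l)"
    using line by (simp add: K_def qscale_def qfr_def line_poly_def vectorial_def k5 k6 divide_inverse)
  have "k_sandwich (qscale (h * l) Q) = qscale h Lp"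
    using PkP by (simp add: P k_sandwich_def)
  then have "qdot M Ld = 0"
    unfolding M_Q by (rule line_poly_k_sandwich_orth[OF line]) (use h l in simp_all)
  then have K_orth: "qdot (k_sandwich Qf) K = 0"
    by (simp add: K_def qdot_qscale_right qdot_qfr flip: M_Qf)
  have "qdot Qf Qf \<noteq> 0"
    using qdot_self_pos[of Qf] q3nz by (simp add: Qf)
  then have solutions: "k_polar Qf D = qneg K \<longleftrightarrow> D = k_polar_solution Qf K d0"
    using k_polar_eq_neg_iff[of Qf K D] q3nz m3nz K_orth by (simp add: Qf m3_Qf K_Quat D)
  have P_Qf: "qfr P = qscale (to_fract (h * l)) Qf"
    by (simp add: P Qf_def qfr_qscale)
  have Ld_K: "qscale (to_fract h) (qfr Ld) = qscale (to_fract (h * l)) K"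
    using l by (simp add: K_def qscale_def)
  have hl: "to_fract (h * l) \<noteq> 0"
    using h l by simp
  show ?thesis
    unfolding P_Qf Ld_K scaled_k_polar_eq_iff[OF hl] solutions
    by (simp add: D Qf K_Quat k_polar_solution_Quat[OF m3_Qf[unfolded Qf] q3nz m3nz])
qed

end
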